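(* For all positive integers $n$ and $k$, \[ |\mathrm{Hom}^1(P_n,P_k)| = \sum_{j\in\mathbb Z}\left(\binom{n-1}{\lceil (n-1)/2\rceil - j(k+1)} - \binom{n-1}{\lfloor (n+k)/2\rfloor - j(k+1)}\right). \]
   Context: For a positive integer $m$, $P_m$ denotes the path with vertex set $[m]=\{1,\dots,m\}$ in which $i$ and $j$ are adjacent iff $|i-j|=1$; $\mathrm{Hom}(P_n,P_k)$ is the set of maps $f:[n]\to[k]$ with $|f(i)-f(i+1)|=1$ for $1\le i\le n-1$, and $\mathrm{Hom}^1(P_n,P_k)=\{f\in\mathrm{Hom}(P_n,P_k): f(1)=1\}$. Convention: $\binom{a}{b}=0$ if $b<0$ or $b>a$. *)

theory Defs
  imports "HOL-Analysis.Analysis"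
begin

definition path_hom :: "nat \<Rightarrow> nat \<Rightarrow> (nat \<Rightarrow> nat) set" where
  "path_hom n k = {f \<in> {1..n} \<rightarrow>\<^sub>E {1..k}.
      \<forall>i. 1 \<le> i \<and> i \<le> n - 1 \<longrightarrow> \<bar>int (f i) - int (f (i + 1))\<bar> = 1}"

definition path_hom1 :: "nat \<Rightarrow> nat \<Rightarrow> (nat \<Rightarrow> nat) set" where
  "path_hom1 n k = {f \<in> path_hom n k. f 1 = 1}"

definition binom_int :: "nat \<Rightarrow> int \<Rightarrow> int" where
  "binom_int a b = (if b < 0 \<or> b > int a then 0 else int (a choose nat b))"

end

theory Submission
  imports Defs
begin

(*
  A homomorphism is a walk of n - 1 steps of size +-1 that starts at vertex 1 and
  stays inside {1..k}.  Walks on the cycle Z/cZ with c = 2(k+1), started at 0,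
  satisfy the same recursion as the number of homomorphisms ending at vertex b,
  once one takes the difference of the cycle counts at b - 1 and b + 1: the
  symmetry d -> -d and the reflection d -> c - d make the difference vanish at the
  two "walls" b = 0 and b = k + 1.  Summing over b telescopes, and unrolling the
  cycle into the integer line expresses each cycle count as an infinite sum of
  line walk counts, i.e. of binomial coefficients.
*)

text \<open>Number of +-1 walks of length m on the integers from 0 to e.\<close>
definition line_walks :: "nat \<Rightarrow> int \<Rightarrow> int" where
  "line_walks m e = (if even (int m + e) then binom_int m ((int m + e) div 2) else 0)"

lemma binom_int_Suc: "binom_int (Suc m) t = binom_int m (t - 1) + binom_int m t"
proof -
  consider "t \<le> 0" | "t = int m + 1" | "t > int m + 1" | "1 \<le> t \<and> t \<le> int m"
    by linarith
  then show ?thesis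
  proof cases
    case 4
    define s where "s = nat t - 1"
    have "nat t = Suc s" "nat (t - 1) = s" "s < m" using 4 unfolding s_def by auto
    then show ?thesis using 4 by (simp add: binom_int_def)
  qed (auto simp: binom_int_def nat_add_distrib)
qed

lemma line_walks_0: "line_walks 0 e = (if e = 0 then 1 else 0)"
  unfolding line_walks_def binom_int_def by auto

lemma line_walks_Suc: "line_walks (Suc m) e = line_walks m (e - 1) + line_walks m (e + 1)"
proof (cases "even (int m + 1 + e)")
  case True
  define t where "t = (int m + 1 + e) div 2"
  have "line_walks (Suc m) e = binom_int (Suc m) t"
    unfolding line_walks_def t_def using True by (simp add: ac_simps)
  moreover have "even (int m + (e - 1))" "(int m + (e - 1)) div 2 = t - 1"
    and "even (int m + (e + 1))" "(int m + (e + 1)) div 2 = t"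
    unfolding t_def using True by presburger+
  then have "line_walks m (e - 1) = binom_int m (t - 1)" "line_walks m (e + 1) = binom_int m t"
    unfolding line_walks_def by simp_all
  ultimately show ?thesis by (simp add: binom_int_Suc)
next
  case False
  then show ?thesis unfolding line_walks_def by presburger
qed

text \<open>Exactly one of two neighbouring endpoints has the parity of m.\<close>
lemma line_walks_adjacent: "line_walks m e + line_walks m (e + 1) = binom_int m ((int m + e + 1) div 2)"
  unfolding line_walks_def by (auto simp: algebra_simps)

fun cycle_walks :: "int \<Rightarrow> nat \<Rightarrow> int \<Rightarrow> int" where
  "cycle_walks c 0 d = (if c dvd d then 1 else 0)"
| "cycle_walks c (Suc m) d = cycle_walks c m (d - 1) + cycle_walks c m (d + 1)"

lemma cycle_walks_uminus: "cycle_walks c m (- d) = cycle_walks c m d"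
proof (induction m arbitrary: d)
  case (Suc m)
  have e: "- d - 1 = - (d + 1)" "- d + 1 = - (d - 1)" by simp_all
  show ?case unfolding cycle_walks.simps e Suc.IH by (rule add.commute)
qed simp

lemma cycle_walks_periodic: "cycle_walks c m (d + c) = cycle_walks c m d"
proof (induction m arbitrary: d)
  case (Suc m)
  show ?case using Suc.IH[of "d - 1"] Suc.IH[of "d + 1"] by (simp add: algebra_simps)
qed (simp add: dvd_add_left_iff)

text \<open>Unrolling the cycle: a walk on Z/cZ ending at d lifts uniquely to a walk on the
  integers ending at some d - j c.\<close>
lemma cycle_walks_unfold:
  assumes "c \<noteq> 0"
  shows "((\<lambda>j::int. line_walks m (d - j * c)) has_sum cycle_walks c m d) UNIV"
proof (induction m arbitrary: d)
  case 0
  have nonzero: "d - j * c \<noteq> 0" if "d - j0 * c = 0" "j \<noteq> j0" for j j0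
  proof
    assume "d - j * c = 0"
    with that have "(j - j0) * c = 0" by (simp add: algebra_simps)
    with that assms show False by simp
  qed
  show ?case
  proof (cases "c dvd d")
    case True
    then obtain j0 where j0: "d - j0 * c = 0" by (metis dvdE mult.commute diff_self)
    show ?thesis
    proof (rule has_sum_finite_neutralI[where B = "{j0}"])
      show "line_walks 0 (d - j * c) = 0" if "j \<in> UNIV - {j0}" for j
        using nonzero[OF j0] that by (simp add: line_walks_0)
      show "cycle_walks c 0 d = (\<Sum>j\<in>{j0}. line_walks 0 (d - j * c))"
        using True j0 by (simp add: line_walks_0)
    qed auto
  next
    case False
    then have "d - j * c \<noteq> 0" for j by (metis dvd_triv_right eq_iff_diff_eq_0)
    then show ?thesis using False by (simp add: line_walks_0)
  qed
next
  case (Suc m)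
  have "((\<lambda>j. line_walks m (d - 1 - j * c) + line_walks m (d + 1 - j * c))
          has_sum (cycle_walks c m (d - 1) + cycle_walks c m (d + 1))) UNIV"
    by (intro has_sum_add Suc.IH)
  then show ?case by (simp add: line_walks_Suc algebra_simps)
qed

definition homs_ending :: "nat \<Rightarrow> nat \<Rightarrow> nat \<Rightarrow> (nat \<Rightarrow> nat) set" where
  "homs_ending n k b = {f \<in> path_hom1 n k. f n = b}"

lemma finite_path_hom1: "finite (path_hom1 n k)"
proof (rule finite_subset)
  show "path_hom1 n k \<subseteq> {1..n} \<rightarrow>\<^sub>E {1..k}" unfolding path_hom1_def path_hom_def by auto
qed (auto intro: finite_PiE)

lemma finite_homs_ending: "finite (homs_ending n k b)"
  unfolding homs_ending_def using finite_path_hom1 by simp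

lemma path_hom1_range: "f \<in> path_hom1 n k \<Longrightarrow> i \<in> {1..n} \<Longrightarrow> f i \<in> {1..k}"
  unfolding path_hom1_def path_hom_def by auto

lemma homs_ending_out_of_range:
  assumes "n \<ge> 1" "b \<notin> {1..k}"
  shows "homs_ending n k b = {}"
  using path_hom1_range[of _ n k n] assms unfolding homs_ending_def by auto

lemma homs_ending_1:
  assumes "k \<ge> 1"
  shows "homs_ending 1 k b = (if b = 1 then {restrict (\<lambda>_. 1) {1}} else {})"
proof -
  have "path_hom1 1 k = {restrict (\<lambda>_. 1) {1}}"
    using assms unfolding path_hom1_def path_hom_def
    by (auto simp: PiE_iff extensional_def fun_eq_iff)
  then show ?thesis unfolding homs_ending_def by auto
qed

lemma card_path_hom1_split:
  assumes "n \<ge> 1"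
  shows "card (path_hom1 n k) = (\<Sum>b\<in>{1..k}. card (homs_ending n k b))"
proof -
  have "path_hom1 n k = (\<Union>b\<in>{1..k}. homs_ending n k b)"
    using path_hom1_range[of _ n k n] assms unfolding homs_ending_def by auto
  then have "card (path_hom1 n k) = card (\<Union>b\<in>{1..k}. homs_ending n k b)" by simp
  also have "\<dots> = (\<Sum>b\<in>{1..k}. card (homs_ending n k b))"
    by (rule card_UN_disjoint) (use finite_homs_ending in \<open>auto simp: homs_ending_def\<close>)
  finally show ?thesis .
qed

lemma restrict_path_hom1:
  assumes "n \<ge> 1" "f \<in> path_hom1 (Suc n) k"
  shows "restrict f {1..n} \<in> path_hom1 n k" "\<bar>int (f n) - int (f (Suc n))\<bar> = 1"
  using assms unfolding path_hom1_def path_hom_def by (auto simp: PiE_iff)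

lemma extend_path_hom1:
  assumes "n \<ge> 1" "g \<in> path_hom1 n k" "b \<in> {1..k}" "\<bar>int (g n) - int b\<bar> = 1"
  shows "g(Suc n := b) \<in> path_hom1 (Suc n) k"
proof -
  have g: "g \<in> {1..n} \<rightarrow>\<^sub>E {1..k}" "g 1 = 1"
    and adj: "\<And>i. 1 \<le> i \<Longrightarrow> i \<le> n - 1 \<Longrightarrow> \<bar>int (g i) - int (g (i + 1))\<bar> = 1"
    using assms(2) unfolding path_hom1_def path_hom_def by auto
  have "\<bar>int ((g(Suc n := b)) i) - int ((g(Suc n := b)) (i + 1))\<bar> = 1" if "1 \<le> i" "i \<le> n" for i
    using adj[of i] assms(4) that by (cases "i = n") auto
  then show ?thesis
    using g assms unfolding path_hom1_def path_hom_def by (auto simp: PiE_iff extensional_def)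
qed

lemma bij_homs_ending_Suc:
  assumes "n \<ge> 1" "b \<in> {1..k}"
  shows "bij_betw (\<lambda>f. restrict f {1..n}) (homs_ending (Suc n) k b)
           {g \<in> path_hom1 n k. \<bar>int (g n) - int b\<bar> = 1}"
proof (rule bij_betw_byWitness[where f' = "\<lambda>g. g(Suc n := b)"])
  show "\<forall>f\<in>homs_ending (Suc n) k b. (restrict f {1..n})(Suc n := b) = f"
    unfolding homs_ending_def path_hom1_def path_hom_def
    by (auto simp: fun_eq_iff PiE_iff extensional_def)
  show "\<forall>g\<in>{g \<in> path_hom1 n k. \<bar>int (g n) - int b\<bar> = 1}. restrict (g(Suc n := b)) {1..n} = g"
    unfolding path_hom1_def path_hom_def by (auto simp: fun_eq_iff PiE_iff extensional_def)
  show "(\<lambda>f. restrict f {1..n}) ` homs_ending (Suc n) k b \<subseteq> {g \<in> path_hom1 n k. \<bar>int (g n) - int b\<bar> = 1}"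
    using restrict_path_hom1[OF assms(1)] assms(1) unfolding homs_ending_def by auto
  show "(\<lambda>g. g(Suc n := b)) ` {g \<in> path_hom1 n k. \<bar>int (g n) - int b\<bar> = 1} \<subseteq> homs_ending (Suc n) k b"
    using extend_path_hom1[OF assms(1) _ assms(2)] unfolding homs_ending_def by auto
qed

lemma card_homs_ending_Suc:
  assumes "n \<ge> 1" "b \<in> {1..k}"
  shows "card (homs_ending (Suc n) k b) = card (homs_ending n k (b - 1)) + card (homs_ending n k (b + 1))"
proof -
  have "{g \<in> path_hom1 n k. \<bar>int (g n) - int b\<bar> = 1} = homs_ending n k (b - 1) \<union> homs_ending n k (b + 1)"
    using assms(2) unfolding homs_ending_def by auto
  moreover have "homs_ending n k (b - 1) \<inter> homs_ending n k (b + 1) = {}"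
    using assms(2) unfolding homs_ending_def by auto
  ultimately show ?thesis
    using bij_betw_same_card[OF bij_homs_ending_Suc[OF assms]]
    by (simp add: card_Un_disjoint finite_homs_ending)
qed

lemma cycle_walks_reflect: "cycle_walks c m (c - d) = cycle_walks c m d"
  using cycle_walks_periodic[of c m "- d"] cycle_walks_uminus[of c m d] by simp

text \<open>Both sides satisfy the walk
  recursion inside the strip, and the right-hand side vanishes at b = 0 and b = k + 1.\<close>
lemma card_homs_ending_cycle_walks:
  assumes "k \<ge> 1"
  shows "b \<le> k + 1 \<Longrightarrow> int (card (homs_ending (Suc m) k b))
           = cycle_walks (2 * (int k + 1)) m (int b - 1) - cycle_walks (2 * (int k + 1)) m (int b + 1)"
proof (induction m arbitrary: b)
  case 0
  let ?c = "2 * (int k + 1)"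
  have "\<not> ?c dvd int b + 1"
    using dvd_imp_le_int[of "int b + 1" ?c] 0 assms by auto
  moreover have "?c dvd int b - 1 \<longleftrightarrow> b = 1"
    using dvd_imp_le_int[of "int b - 1" ?c] 0 assms by (cases "b = 1") auto
  ultimately show ?case using homs_ending_1[OF assms, of b] by simp
next
  case (Suc m)
  let ?Q = "cycle_walks (2 * (int k + 1)) m"
  consider "b = 0" | "b = k + 1" | "b \<in> {1..k}" using Suc.prems by fastforce
  then show ?case
  proof cases
    case 1
    then show ?thesis using homs_ending_out_of_range[of "Suc (Suc m)" b k]
      cycle_walks_uminus[of _ "Suc m" 1] by simp
  next
    case 2
    then show ?thesis using homs_ending_out_of_range[of "Suc (Suc m)" b k]
      cycle_walks_reflect[of "2 * (int k + 1)" "Suc m" "int k"] by (simp add: algebra_simps)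
  next
    case 3
    have "int (card (homs_ending (Suc (Suc m)) k b))
        = int (card (homs_ending (Suc m) k (b - 1))) + int (card (homs_ending (Suc m) k (b + 1)))"
      using card_homs_ending_Suc[of "Suc m" b k] 3 by simp
    also have "\<dots> = (?Q (int b - 2) - ?Q (int b)) + (?Q (int b) - ?Q (int b + 2))"
    proof -
      have "b - 1 \<le> k + 1" "b + 1 \<le> k + 1" using 3 by auto
      moreover have "int (b - 1) - 1 = int b - 2" "int (b - 1) + 1 = int b"
        and "int (b + 1) - 1 = int b" "int (b + 1) + 1 = int b + 2" using 3 by auto
      ultimately show ?thesis using Suc.IH[of "b - 1"] Suc.IH[of "b + 1"] by (simp add: add.commute)
    qed
    also have "\<dots> = cycle_walks (2 * (int k + 1)) (Suc m) (int b - 1)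
                   - cycle_walks (2 * (int k + 1)) (Suc m) (int b + 1)"
      by (simp add: algebra_simps)
    finally show ?thesis .
  qed
qed

lemma sum_telescope_shift2:
  fixes g :: "int \<Rightarrow> 'a::ab_group_add"
  shows "(\<Sum>b\<in>{1..k}. g (int b - 1) - g (int b + 1)) = g 0 + g 1 - g (int k) - g (int k + 1)"
  by (induction k) (simp_all add: algebra_simps)

lemma card_path_hom1_cycle_walks:
  fixes m k :: nat
  assumes "k \<ge> 1"
  defines "Q \<equiv> cycle_walks (2 * (int k + 1)) m"
  shows "int (card (path_hom1 (Suc m) k)) = (Q 0 + Q 1) - (Q (int k) + Q (int k + 1))"
proof -
  have "int (card (path_hom1 (Suc m) k)) = (\<Sum>b\<in>{1..k}. int (card (homs_ending (Suc m) k b)))"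
    by (simp add: card_path_hom1_split)
  also have "\<dots> = (\<Sum>b\<in>{1..k}. Q (int b - 1) - Q (int b + 1))"
    unfolding Q_def using card_homs_ending_cycle_walks[OF assms(1)] by simp
  also have "\<dots> = (Q 0 + Q 1) - (Q (int k) + Q (int k + 1))"
    using sum_telescope_shift2[of Q k] by simp
  finally show ?thesis .
qed

lemma has_sum_diff:
  fixes f g :: "'a \<Rightarrow> 'b::{topological_comm_monoid_add, topological_semigroup_mult, ring_1}"
  assumes "(f has_sum a) A" "(g has_sum b) A"
  shows "((\<lambda>x. f x - g x) has_sum (a - b)) A"
  using has_sum_add[OF assms(1) has_sum_uminusI[OF assms(2)]] by simp

lemma binom_has_sum_cycle_walks:
  assumes "r \<noteq> 0"
  shows "((\<lambda>j::int. binom_int m ((int m + e + 1) div 2 - j * r))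
           has_sum (cycle_walks (2 * r) m e + cycle_walks (2 * r) m (e + 1))) UNIV"
proof -
  have index: "(int m + (e - j * (2 * r)) + 1) div 2 = (int m + e + 1) div 2 - j * r" for j
  proof -
    have "int m + (e - j * (2 * r)) + 1 = (int m + e + 1) + 2 * (- j * r)" by (simp add: algebra_simps)
    moreover have "(x + 2 * y) div 2 = x div 2 + y" for x y :: int by presburger
    ultimately show ?thesis by (simp only:)
  qed
  have "((\<lambda>j. line_walks m (e - j * (2 * r)) + line_walks m (e + 1 - j * (2 * r)))
         has_sum (cycle_walks (2 * r) m e + cycle_walks (2 * r) m (e + 1))) UNIV"
    using assms by (intro has_sum_add cycle_walks_unfold) simp_all
  moreover have "line_walks m (e - j * (2 * r)) + line_walks m (e + 1 - j * (2 * r))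
                 = binom_int m ((int m + e + 1) div 2 - j * r)" for j
  proof -
    have "e + 1 - j * (2 * r) = (e - j * (2 * r)) + 1" by simp
    then have "line_walks m (e - j * (2 * r)) + line_walks m (e + 1 - j * (2 * r))
               = binom_int m ((int m + (e - j * (2 * r)) + 1) div 2)"
      by (simp only: line_walks_adjacent)
    then show ?thesis by (simp only: index)
  qed
  ultimately show ?thesis by simp
qed

lemma ceiling_half: "\<lceil>(real (Suc m) - 1) / 2\<rceil> = (int m + 1) div 2"
proof -
  have "\<lceil>(real (Suc m) - 1) / 2\<rceil> = - (- int m div 2)"
    using ceiling_divide_eq_div[of "int m" 2] by simp
  then show ?thesis by presburger
qed

lemma floor_half: "\<lfloor>(real (Suc m) + real k) / 2\<rfloor> = (int m + int k + 1) div 2"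
  using floor_divide_of_int_eq[of "int m + int k + 1" 2] by (simp add: add_ac)

theorem mainTheorem4:
  fixes n k :: nat
  assumes "n \<ge> 1" and "k \<ge> 1"
  shows "((\<lambda>j::int. binom_int (n - 1) (\<lceil>(real n - 1) / 2\<rceil> - j * (int k + 1))
                   - binom_int (n - 1) (\<lfloor>(real n + real k) / 2\<rfloor> - j * (int k + 1)))
          has_sum int (card (path_hom1 n k))) UNIV"
proof -
  obtain m where n: "n = Suc m" using assms(1) by (cases n) auto
  let ?r = "int k + 1"
  have r: "?r \<noteq> 0" by simp
  have "((\<lambda>j. binom_int m ((int m + 1) div 2 - j * ?r)
              - binom_int m ((int m + int k + 1) div 2 - j * ?r))
         has_sum ((cycle_walks (2 * ?r) m 0 + cycle_walks (2 * ?r) m 1)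
                  - (cycle_walks (2 * ?r) m (int k) + cycle_walks (2 * ?r) m (int k + 1)))) UNIV"
    using has_sum_diff[OF binom_has_sum_cycle_walks[OF r, of m 0]
                     binom_has_sum_cycle_walks[OF r, of m "int k"]]
    by simp
  then show ?thesis
    unfolding n ceiling_half floor_half card_path_hom1_cycle_walks[OF assms(2)] by simp
qed

end
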